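(* Let $(Q,\cdot)$ be a Ward quasigroup with $xx=e$ for all $x\in Q$. Define $x\star y=(e\cdot x)\cdot y$. Then $(Q,\star)$ is a quasigroup satisfying $((e\star e)\star(x\star z))\star((e\star y)\star z)=x\star y$ for all $x,y,z\in Q$, i.e. $(Q,\star,e)$ is a double Ward quasigroup.
   Context: A quasigroup is a magma in which $ax=b$ and $ya=b$ have unique solutions for all $a,b$. A Ward quasigroup is a quasigroup satisfying $(xz)(yz)=xy$ for all $x,y,z$; in it there is $e$ with $xx=e$ for all $x$. A double Ward quasigroup $(Q,\cdot,e)$ is a quasigroup with an element $e$ such that $(ee\cdot xz)(ey\cdot z)=xy$ for all $x,y,z$. *)

theory Defs
  imports Main
begin

definition quasigroup :: "('a \<Rightarrow> 'a \<Rightarrow> 'a) \<Rightarrow> bool" where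
  "quasigroup m \<longleftrightarrow> (\<forall>a b. \<exists>!x. m a x = b) \<and> (\<forall>a b. \<exists>!y. m y a = b)"

definition ward_quasigroup :: "('a \<Rightarrow> 'a \<Rightarrow> 'a) \<Rightarrow> bool" where
  "ward_quasigroup m \<longleftrightarrow> quasigroup m \<and> (\<forall>x y z. m (m x z) (m y z) = m x y)"

definition double_ward_quasigroup :: "('a \<Rightarrow> 'a \<Rightarrow> 'a) \<Rightarrow> 'a \<Rightarrow> bool" where
  "double_ward_quasigroup m e \<longleftrightarrow> quasigroup m \<and>
     (\<forall>x y z. m (m (m e e) (m x z)) (m (m e y) z) = m x y)"

end

theory Submission
  imports Defs
begin

text \<open>In a Ward quasigroup with \<open>xx = e\<close>, \<open>e\<close> is a right identity and \<open>e(ab) = ba\<close>; in particular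
  \<open>x \<mapsto> ex\<close> is an involution. Hence \<open>x \<star> y = (ex)y\<close> is a principal isotope, so a quasigroup, and
  the double Ward identity rewrites via \<open>e(ab) = ba\<close> to the Ward identity
  \<open>((ex)z)(yz) = (ex)y\<close>.\<close>

lemma quasigroup_isotope:
  assumes "quasigroup m" and "bij f"
  shows "quasigroup (\<lambda>x y. m (f x) y)"
  unfolding quasigroup_def
proof (intro conjI allI)
  fix a b
  show "\<exists>!x. m (f a) x = b" using assms(1) unfolding quasigroup_def by blast
next
  fix a b
  obtain w where w: "m w a = b" and w_unique: "\<And>w'. m w' a = b \<Longrightarrow> w' = w"
    using assms(1) unfolding quasigroup_def by metis
  show "\<exists>!y. m (f y) a = b"
  proof
    show "m (f (inv f w)) a = b" using w bij_inv_eq_iff[OF assms(2)] by metis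
  next
    fix y assume "m (f y) a = b"
    then show "y = inv f w" using w_unique bij_inv_eq_iff[OF assms(2)] by metis
  qed
qed

locale ward_with_unit =
  fixes m :: "'a \<Rightarrow> 'a \<Rightarrow> 'a" and e :: 'a
  assumes ward: "ward_quasigroup m"
    and square: "\<And>x. m x x = e"
begin

lemma quasigroup: "quasigroup m"
  using ward unfolding ward_quasigroup_def by blast

lemma ward_identity: "m (m x z) (m y z) = m x y"
  using ward unfolding ward_quasigroup_def by blast

lemma right_unit: "m u e = u"
proof -
  obtain x where "m u x = u" using quasigroup unfolding quasigroup_def by metis
  then show ?thesis using ward_identity[of u x x] square[of x] by simp
qed

lemma unit_swap: "m e (m a b) = m b a"
  using ward_identity[of b b a] square[of b] by simp

lemma unit_involution: "m e (m e x) = x"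
  using unit_swap[of e x] right_unit[of x] by simp

lemma bij_unit_mult: "bij (m e)"
  by (metis bijI' unit_involution)

end

theorem proposition4p2:
  fixes mult :: "'a \<Rightarrow> 'a \<Rightarrow> 'a" and e :: 'a
  assumes "ward_quasigroup mult"
    and "\<forall>x. mult x x = e"
  shows "double_ward_quasigroup (\<lambda>x y. mult (mult e x) y) e"
proof -
  interpret ward_with_unit mult e
    using assms by unfold_locales auto
  have "mult e e = e" by (rule square)
  then have "mult (mult e (mult (mult e (mult (mult e e) e)) (mult (mult e x) z)))
               (mult (mult e (mult (mult e e) y)) z) = mult (mult e x) y" for x y z
    by (simp add: right_unit unit_swap unit_involution ward_identity)
  then show ?thesis
    unfolding double_ward_quasigroup_def
    using quasigroup_isotope[OF quasigroup bij_unit_mult] by blast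
qed

end
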